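(* Let $N,d_h,d_e\ge1$ and let $\mathcal{M}$ be the space of triples $\mathbf{Z}=(\mathbf{X},\mathbf{H},\mathbf{A})$ with $\mathbf{X}\in\mathbb{R}^{N\times 3}$ zero-centered (rows sum to zero), $\mathbf{H}\in\mathbb{R}^{N\times d_h}$, $\mathbf{A}\in\mathbb{R}^{N\times N\times d_e}$. Let $\mathcal{G}=SO(3)\times S_N$ act by $(R,\pi)\cdot(\mathbf{X},\mathbf{H},\mathbf{A})=(\pi(\mathbf{X})R^\top,\pi(\mathbf{H}),\pi(\mathbf{A}))$, where $\pi$ permutes rows of $\mathbf{X},\mathbf{H}$ and simultaneously rows and columns of $\mathbf{A}$, and let $\lambda$ be the Haar probability measure on $\mathcal{G}$. Let $\mu$ be a $\mathcal{G}$-invariant probability measure on $\mathcal{M}$ under which the stabilizer $\{g:g\cdot\mathbf{Z}=\mathbf{Z}\}$ is trivial almost surely. Let $\Psi:\mathcal{M}\to\mathcal{M}$ be a measurable canonicalization map ($\Psi(\mathbf{Z})$ lies in the orbit of $\mathbf{Z}$ and $\Psi(g\cdot\mathbf{Z})=\Psi(\mathbf{Z})$ for all $g$), defined $\mu$-a.s., with slice $S=\Psi(\mathcal{M})$, and let $\nu:=\Psi_{\#}\mu$. Let $\varepsilon>0$ and let $\hat\mu_{\mathrm{eq}}$ be a $\mathcal{G}$-invariant probability measure on $\mathcal{M}$ (the output of an equivariant baseline model) with $\mathrm{TV}(\hat\mu_{\mathrm{eq}},\mu)<\varepsilon$, and set $\hat\nu_{\mathrm{eq}}:=\Psi_{\#}\hat\mu_{\mathrm{eq}}$.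 Let $\{\hat\nu_\theta\}_\theta$ be a family of probability measures on $S$ such that $$\inf_\theta \mathrm{TV}(\hat\nu_\theta,\nu)\le\mathrm{TV}(\hat\nu_{\mathrm{eq}},\nu).$$ Then there exists $\theta$ such that the Haar-randomized model $$\hat\mu_\theta:=\int_S\Big(\int_{\mathcal{G}}\delta_{g\cdot\mathbf{Z}}\,d\lambda(g)\Big)\,d\hat\nu_\theta(\mathbf{Z})$$ satisfies $\mathrm{TV}(\hat\mu_\theta,\mu)<\varepsilon$.
   Context: $\mathrm{TV}$ denotes total variation distance; $\Psi_{\#}\mu$ denotes the pushforward measure. *)

theory Defs
  imports "HOL-Analysis.Analysis" "HOL-Probability.Probability"
begin

text \<open>Configurations Z = (X, H, A): X has N rows in R^3, H has N rows in R^dh,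
  A is an N x N array of vectors in R^de.  N = CARD('n), dh = CARD('h), de = CARD('e).\<close>
type_synonym ('n, 'h, 'e) config =
  "(real^3^'n) \<times> (real^'h^'n) \<times> (real^'e^'n^'n)"

definition zero_centered :: "('n::finite, 'h::finite, 'e::finite) config set" where
  "zero_centered = {(X, H, A). (\<Sum>i\<in>UNIV. X $ i) = 0}"

definition Mspace :: "('n::finite, 'h::finite, 'e::finite) config measure" where
  "Mspace = restrict_space borel zero_centered"

definition SO3 :: "(real^3^3) set" where
  "SO3 = {R. orthogonal_matrix R \<and> det R = 1}"

definition Gset :: "((real^3^3) \<times> ('n::finite \<Rightarrow> 'n)) set" where
  "Gset = SO3 \<times> {p. bij p}"

definition Gspace :: "((real^3^3) \<times> ('n::finite \<Rightarrow> 'n)) measure" where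
  "Gspace = restrict_space borel SO3 \<Otimes>\<^sub>M count_space {p. bij p}"

definition gmul :: "(real^3^3) \<times> ('n \<Rightarrow> 'n) \<Rightarrow> (real^3^3) \<times> ('n \<Rightarrow> 'n)
    \<Rightarrow> (real^3^3) \<times> ('n \<Rightarrow> 'n)" where
  "gmul g h = (fst g ** fst h, snd g \<circ> snd h)"

text \<open>(R, pi) . (X, H, A) = (pi(X) R^T, pi(H), pi(A)), with (pi Y)_i = Y_(pi^-1 i);
  row i of X R^T is R applied to row i of X.\<close>
definition act :: "(real^3^3) \<times> ('n::finite \<Rightarrow> 'n) \<Rightarrow> ('n, 'h::finite, 'e::finite) config
    \<Rightarrow> ('n, 'h, 'e) config" where
  "act g Z = (case g of (R, p) \<Rightarrow> case Z of (X, H, A) \<Rightarrow>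
      ((\<chi> i. R *v (X $ inv p i)),
       (\<chi> i. H $ inv p i),
       (\<chi> i j. A $ inv p i $ inv p j)))"

definition haar_prob :: "((real^3^3) \<times> ('n::finite \<Rightarrow> 'n)) measure \<Rightarrow> bool" where
  "haar_prob lam \<longleftrightarrow> prob_space lam \<and> sets lam = sets Gspace \<and>
     (\<forall>g\<in>Gset. distr lam Gspace (\<lambda>h. gmul g h) = lam) \<and>
     (\<forall>g\<in>Gset. distr lam Gspace (\<lambda>h. gmul h g) = lam)"

definition G_invariant :: "('n::finite, 'h::finite, 'e::finite) config measure \<Rightarrow> bool" where
  "G_invariant m \<longleftrightarrow> (\<forall>g\<in>(Gset :: ((real^3^3) \<times> ('n \<Rightarrow> 'n)) set).
      distr m Mspace (act g) = m)"

definition tv :: "'a measure \<Rightarrow> 'a measure \<Rightarrow> real" where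
  "tv P Q = (SUP A\<in>sets P. \<bar>measure P A - measure Q A\<bar>)"

definition randomize :: "((real^3^3) \<times> ('n::finite \<Rightarrow> 'n)) measure
    \<Rightarrow> ('n, 'h::finite, 'e::finite) config measure \<Rightarrow> ('n, 'h, 'e) config measure" where
  "randomize lam nu = nu \<bind> (\<lambda>Z. distr lam Mspace (\<lambda>g. act g Z))"

end

theory Submission
  imports Defs
begin

text \<open>Total variation cannot increase under a measurable map or under a Markov kernel.
  Haar-randomization is the kernel \<open>Z \<mapsto> law of g \<cdot> Z\<close>; by right invariance of the Haar
  measure it is constant on orbits, so it sends \<open>\<nu> = \<Psi>\<^sub>#\<mu>\<close> to the randomization of \<open>\<mu>\<close>
  itself, which is \<open>\<mu>\<close> by Fubini and the invariance of \<open>\<mu>\<close>. Hence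
  \<open>TV(\<mu>\<^sub>\<theta>, \<mu>) \<le> TV(\<nu>\<^sub>\<theta>, \<nu>)\<close>, and some \<open>\<theta>\<close> makes the right side smaller than
  \<open>TV(\<Psi>\<^sub>#\<mu>\<^sub>e\<^sub>q, \<Psi>\<^sub>#\<mu>) \<le> TV(\<mu>\<^sub>e\<^sub>q, \<mu>) < \<epsilon>\<close>.\<close>

lemma bdd_above_measure_diff:
  assumes "prob_space P" "prob_space Q"
  shows "bdd_above ((\<lambda>A. \<bar>measure P A - measure Q A\<bar>) ` S)"
proof (rule bdd_aboveI2)
  fix A
  have "0 \<le> measure P A" "measure P A \<le> 1" "0 \<le> measure Q A" "measure Q A \<le> 1"
    using assms by (auto intro: prob_space.prob_le_1)
  then show "\<bar>measure P A - measure Q A\<bar> \<le> 1" by linarith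
qed

lemma measure_diff_le_tv:
  assumes "prob_space P" "prob_space Q" "A \<in> sets P"
  shows "\<bar>measure P A - measure Q A\<bar> \<le> tv P Q"
  unfolding tv_def by (rule cSUP_upper[OF assms(3) bdd_above_measure_diff[OF assms(1,2)]])

lemma tv_commute: "sets P = sets Q \<Longrightarrow> tv P Q = tv Q P"
  unfolding tv_def by (simp add: abs_minus_commute)

lemma card_le_real_bounds:
  assumes "0 \<le> t" "t \<le> real n"
  shows "t - 1 \<le> real (card {k\<in>{1..n}. real k \<le> t})"
    and "real (card {k\<in>{1..n}. real k \<le> t}) \<le> t"
proof -
  have "{k\<in>{1..n}. real k \<le> t} = {1..nat \<lfloor>t\<rfloor>}"
    using assms by (auto simp: le_nat_iff le_floor_iff)
  then have "real (card {k\<in>{1..n}. real k \<le> t}) = of_int \<lfloor>t\<rfloor>"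
    using assms by simp
  then show "t - 1 \<le> real (card {k\<in>{1..n}. real k \<le> t})"
    and "real (card {k\<in>{1..n}. real k \<le> t}) \<le> t"
    by linarith+
qed

lemma (in prob_space) integral_level_sets_bounds:
  fixes f :: "'a \<Rightarrow> real"
  assumes f: "f \<in> borel_measurable M" and f01: "\<And>x. x \<in> space M \<Longrightarrow> 0 \<le> f x \<and> f x \<le> 1"
  shows "real n * expectation f - 1 \<le> (\<Sum>k\<in>{1..n}. prob {x\<in>space M. real k \<le> real n * f x})"
    and "(\<Sum>k\<in>{1..n}. prob {x\<in>space M. real k \<le> real n * f x}) \<le> real n * expectation f"
proof -
  define L where "L k = {x\<in>space M. real k \<le> real n * f x}" for k :: nat
  define S where "S x = (\<Sum>k\<in>{1..n}. indicator (L k) x :: real)" for x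
  have S_card: "S x = real (card {k\<in>{1..n}. real k \<le> real n * f x})" if "x \<in> space M" for x
    using that by (simp add: S_def L_def indicator_def sum.If_cases Int_def)
  have "0 \<le> real n * f x" "real n * f x \<le> real n" if "x \<in> space M" for x
    using f01[OF that] by (auto simp: mult_left_le)
  then have S_bounds: "real n * f x - 1 \<le> S x" "S x \<le> real n * f x" if "x \<in> space M" for x
    using card_le_real_bounds S_card that by auto
  have L_events: "L k \<in> events" for k
    unfolding L_def using f by measurable
  have int_L: "integrable M (indicator (L k) :: 'a \<Rightarrow> real)" for k
    using L_events by (simp add: emeasure_eq_measure)
  have int_f: "integrable M f"
    using f f01 by (intro integrable_const_bound[where B=1]) auto
  have int_S: "integrable M S"
    unfolding S_def by (intro Bochner_Integration.integrable_sum int_L)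
  have "expectation S = (\<Sum>k\<in>{1..n}. prob (L k))"
    unfolding S_def using L_events
    by (subst Bochner_Integration.integral_sum) (auto simp: int_L Int_absorb2)
  moreover have "expectation (\<lambda>x. real n * f x - 1) \<le> expectation S"
    using S_bounds int_f int_S by (intro integral_mono) auto
  moreover have "expectation S \<le> expectation (\<lambda>x. real n * f x)"
    using S_bounds int_f int_S by (intro integral_mono) auto
  ultimately show "real n * expectation f - 1 \<le> (\<Sum>k\<in>{1..n}. prob {x\<in>space M. real k \<le> real n * f x})"
    and "(\<Sum>k\<in>{1..n}. prob {x\<in>space M. real k \<le> real n * f x}) \<le> real n * expectation f"
    using int_f by (simp_all add: prob_space L_def)
qed

lemma integral_diff_le_tv_add_inverse:
  fixes f :: "'a \<Rightarrow> real"
  assumes P: "prob_space P" and Q: "prob_space Q" and sets_eq: "sets P = sets Q"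
    and f: "f \<in> borel_measurable P" and f01: "\<And>x. x \<in> space P \<Longrightarrow> 0 \<le> f x \<and> f x \<le> 1"
    and n: "n > 0"
  shows "(\<integral>x. f x \<partial>P) - (\<integral>x. f x \<partial>Q) \<le> tv P Q + 1 / real n"
proof -
  interpret P: prob_space P by fact
  interpret Q: prob_space Q by fact
  have space_eq: "space Q = space P"
    using sets_eq by (rule sets_eq_imp_space_eq[symmetric])
  have fQ: "f \<in> borel_measurable Q"
    using f measurable_cong_sets[OF sets_eq refl] by blast
  define L where "L k = {x\<in>space P. real k \<le> real n * f x}" for k :: nat
  have "real n * (\<integral>x. f x \<partial>P) - 1 \<le> (\<Sum>k\<in>{1..n}. measure P (L k))"
    unfolding L_def by (rule P.integral_level_sets_bounds(1)[OF f f01])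
  moreover have "(\<Sum>k\<in>{1..n}. measure Q (L k)) \<le> real n * (\<integral>x. f x \<partial>Q)"
    unfolding L_def space_eq[symmetric]
    by (rule Q.integral_level_sets_bounds(2)[OF fQ]) (simp add: space_eq f01)
  moreover have "(\<Sum>k\<in>{1..n}. measure P (L k) - measure Q (L k)) \<le> (\<Sum>k\<in>{1..n}. tv P Q)"
  proof (rule sum_mono)
    fix k
    have "L k \<in> sets P" unfolding L_def using f by measurable
    then show "measure P (L k) - measure Q (L k) \<le> tv P Q"
      using measure_diff_le_tv[OF P Q] abs_le_D1 by blast
  qed
  ultimately have "real n * ((\<integral>x. f x \<partial>P) - (\<integral>x. f x \<partial>Q)) \<le> real n * tv P Q + 1"
    unfolding sum_subtractf by (simp add: right_diff_distrib)
  then show ?thesis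
    using n by (simp add: field_simps)
qed

lemma integral_diff_le_tv:
  fixes f :: "'a \<Rightarrow> real"
  assumes "prob_space P" "prob_space Q" "sets P = sets Q"
    and "f \<in> borel_measurable P" "\<And>x. x \<in> space P \<Longrightarrow> 0 \<le> f x \<and> f x \<le> 1"
  shows "(\<integral>x. f x \<partial>P) - (\<integral>x. f x \<partial>Q) \<le> tv P Q"
proof (rule field_le_epsilon)
  fix e :: real assume "e > 0"
  then obtain n where "1 / real (Suc n) < e"
    using reals_Archimedean by (auto simp: inverse_eq_divide)
  moreover have "(\<integral>x. f x \<partial>P) - (\<integral>x. f x \<partial>Q) \<le> tv P Q + 1 / real (Suc n)"
    using integral_diff_le_tv_add_inverse[OF assms zero_less_Suc] by simp
  ultimately show "(\<integral>x. f x \<partial>P) - (\<integral>x. f x \<partial>Q) \<le> tv P Q + e"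
    by linarith
qed

lemma abs_integral_diff_le_tv:
  fixes f :: "'a \<Rightarrow> real"
  assumes P: "prob_space P" and Q: "prob_space Q" and sets_eq: "sets P = sets Q"
    and f: "f \<in> borel_measurable P" and f01: "\<And>x. x \<in> space P \<Longrightarrow> 0 \<le> f x \<and> f x \<le> 1"
  shows "\<bar>(\<integral>x. f x \<partial>P) - (\<integral>x. f x \<partial>Q)\<bar> \<le> tv P Q"
proof -
  have "(\<integral>x. f x \<partial>Q) - (\<integral>x. f x \<partial>P) \<le> tv Q P"
  proof (rule integral_diff_le_tv[OF Q P sets_eq[symmetric]])
    show "f \<in> borel_measurable Q"
      using f measurable_cong_sets[OF sets_eq refl] by blast
    show "0 \<le> f x \<and> f x \<le> 1" if "x \<in> space Q" for x
      using f01 that sets_eq_imp_space_eq[OF sets_eq] by simp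
  qed
  then show ?thesis
    using integral_diff_le_tv[OF assms] tv_commute[OF sets_eq] by linarith
qed

lemma tv_distr_le:
  assumes P: "prob_space P" and Q: "prob_space Q" and "sets P = sets M" "sets Q = sets M"
    and h: "h \<in> measurable M N"
  shows "tv (distr P N h) (distr Q N h) \<le> tv P Q"
  unfolding tv_def[of "distr P N h"]
proof (rule cSUP_least)
  fix A assume "A \<in> sets (distr P N h)"
  then have A: "A \<in> sets N" by simp
  have hP: "h \<in> measurable P N" and hQ: "h \<in> measurable Q N"
    using h measurable_cong_sets[OF assms(3) refl] measurable_cong_sets[OF assms(4) refl] by blast+
  have "space Q = space P"
    using assms(3,4) by (metis sets_eq_imp_space_eq)
  then have "measure (distr Q N h) A = measure Q (h -` A \<inter> space P)"
    using measure_distr[OF hQ A] by simp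
  moreover have "h -` A \<inter> space P \<in> sets P"
    using hP A by (rule measurable_sets)
  ultimately show "\<bar>measure (distr P N h) A - measure (distr Q N h) A\<bar> \<le> tv P Q"
    using measure_diff_le_tv[OF P Q] measure_distr[OF hP A] by simp
qed (use sets.empty_sets in blast)

lemma tv_bind_le:
  assumes P: "prob_space P" and Q: "prob_space Q" and sP: "sets P = sets M" and sQ: "sets Q = sets M"
    and K: "K \<in> measurable M (subprob_algebra N)"
    and K_prob: "\<And>x. x \<in> space M \<Longrightarrow> prob_space (K x)"
  shows "tv (P \<bind> K) (Q \<bind> K) \<le> tv P Q"
  unfolding tv_def[of "P \<bind> K"]
proof (rule cSUP_least)
  interpret P: prob_space P by fact
  interpret Q: prob_space Q by fact
  have space_P: "space P = space M"
    using sP by (metis sets_eq_imp_space_eq)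
  have KP: "K \<in> measurable P (subprob_algebra N)" and KQ: "K \<in> measurable Q (subprob_algebra N)"
    using K measurable_cong_sets[OF sP refl] measurable_cong_sets[OF sQ refl] by blast+
  have "sets (K x) = sets N" if "x \<in> space M" for x
    using K that by (rule subprob_measurableD(2))
  then have sets_bind: "sets (P \<bind> K) = sets N"
    by (rule sets_bind) (use space_P P.not_empty in auto)
  then show "sets (P \<bind> K) \<noteq> {}" by auto
  fix A assume "A \<in> sets (P \<bind> K)"
  then have A: "A \<in> sets N" using sets_bind by simp
  have "(\<lambda>x. measure (K x) A) \<in> borel_measurable P"
    using measurable_compose[OF KP measurable_emeasure_subprob_algebra[OF A]]
    unfolding measure_def by (rule borel_measurable_enn2real)
  moreover have "0 \<le> measure (K x) A \<and> measure (K x) A \<le> 1" if "x \<in> space P" for x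
    using K_prob[of x] that space_P by (auto intro: prob_space.prob_le_1)
  ultimately have "\<bar>(\<integral>x. measure (K x) A \<partial>P) - (\<integral>x. measure (K x) A \<partial>Q)\<bar> \<le> tv P Q"
    using abs_integral_diff_le_tv[OF P Q] sP sQ by simp
  then show "\<bar>measure (P \<bind> K) A - measure (Q \<bind> K) A\<bar> \<le> tv P Q"
    using P.measure_bind[OF KP A] Q.measure_bind[OF KQ A] by simp
qed

lemma space_Gspace: "space Gspace = Gset"
  unfolding Gspace_def Gset_def by (simp add: space_pair_measure space_restrict_space)

lemma haar_prob_basics:
  assumes "haar_prob lam"
  shows "prob_space lam" "sets lam = sets Gspace" "space lam = Gset"
  using assms unfolding haar_prob_def
  by (auto dest: sets_eq_imp_space_eq simp: space_Gspace)

lemma act_Pair: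
  "act (R, p) Z =
     ((\<chi> i. R *v (fst Z $ inv p i)), (\<chi> i. fst (snd Z) $ inv p i),
      (\<chi> i j. snd (snd Z) $ inv p i $ inv p j))"
  by (cases Z) (simp add: act_def)

lemma act_gmul:
  assumes "bij p" "bij q"
  shows "act (R, p) (act (S, q) Z) = act (gmul (R, p) (S, q)) Z"
  using assms by (simp add: act_Pair gmul_def o_inv_distrib matrix_vector_mul_assoc)

lemma act_zero_centered:
  assumes "bij p" "Z \<in> zero_centered"
  shows "act (R, p) Z \<in> zero_centered"
proof -
  obtain X H A where Z: "Z = (X, H, A)" by (cases Z)
  have "bij_betw (inv p) UNIV UNIV"
    using bij_imp_bij_inv[OF assms(1)] unfolding bij_def .
  then have "(\<Sum>i\<in>UNIV. X $ inv p i) = (\<Sum>i\<in>UNIV. X $ i)"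
    by (rule sum.reindex_bij_betw)
  also have "\<dots> = 0"
    using assms(2) Z unfolding zero_centered_def by simp
  finally have "(\<Sum>i\<in>UNIV. R *v (X $ inv p i)) = 0"
    by (simp add: linear_sum[OF matrix_vector_mul_linear, symmetric] matrix_vector_mult_0_right)
  then show ?thesis
    unfolding Z act_def zero_centered_def by simp
qed

lemma continuous_on_act: "continuous_on UNIV (\<lambda>w. act (fst w, p) (snd w))"
  unfolding act_Pair matrix_vector_mult_def
  by (intro continuous_intros continuous_on_Pair)

lemma measurable_act:
  fixes g :: "'a \<Rightarrow> (real^3^3) \<times> ('n::finite \<Rightarrow> 'n)"
    and Z :: "'a \<Rightarrow> ('n, 'h::finite, 'e::finite) config"
  assumes g: "g \<in> measurable M Gspace" and Z: "Z \<in> measurable M Mspace"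
  shows "(\<lambda>w. act (g w) (Z w)) \<in> measurable M Mspace"
proof -
  have perm: "(\<lambda>w. snd (g w)) \<in> measurable M (count_space {p. bij p})"
    using measurable_compose[OF g[unfolded Gspace_def] measurable_snd] .
  have rot: "(\<lambda>w. fst (g w)) \<in> borel_measurable M"
    using measurable_compose[OF g[unfolded Gspace_def] measurable_fst]
    by (simp add: measurable_restrict_space2_iff)
  have Z_borel: "Z \<in> borel_measurable M" and Z_space: "Z \<in> space M \<rightarrow> zero_centered"
    using Z by (simp_all add: Mspace_def measurable_restrict_space2_iff)
  have fixed_perm: "(\<lambda>w. act (fst (g w), p) (Z w)) \<in> measurable M Mspace" if "bij p" for p
  proof -
    have "(\<lambda>w. (fst (g w), Z w)) \<in> borel_measurable M"
      using measurable_Pair[OF rot Z_borel] by (simp add: borel_prod)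
    from borel_measurable_continuous_on[OF continuous_on_act this]
    have "(\<lambda>w. act (fst (g w), p) (Z w)) \<in> borel_measurable M"
      by simp
    moreover have "(\<lambda>w. act (fst (g w), p) (Z w)) \<in> space M \<rightarrow> zero_centered"
      using Z_space act_zero_centered[OF that] by blast
    ultimately show ?thesis
      by (simp add: Mspace_def measurable_restrict_space2_iff)
  qed
  have "(\<lambda>w. (\<lambda>p w. act (fst (g w), p) (Z w)) (snd (g w)) w) \<in> measurable M Mspace"
    by (rule measurable_compose_countable'[OF fixed_perm perm]) (auto intro: countable_finite)
  then show ?thesis by simp
qed

lemma measurable_act_const:
  assumes "g \<in> Gset" "sets M = sets Mspace"
  shows "act g \<in> measurable M Mspace"
  using measurable_act[where g="\<lambda>_. g" and Z="\<lambda>Z. Z", of Mspace] assms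
  by (simp add: space_Gspace measurable_cong_sets[OF assms(2) refl])

lemma measurable_act_at:
  assumes "Z \<in> space Mspace" "sets L = sets Gspace"
  shows "(\<lambda>g. act g Z) \<in> measurable L Mspace"
  using measurable_act[where g="\<lambda>g. g" and Z="\<lambda>_. Z", of Gspace] assms
  by (simp add: measurable_cong_sets[OF assms(2) refl])

lemma SO3_mult: "R \<in> SO3 \<Longrightarrow> S \<in> SO3 \<Longrightarrow> R ** S \<in> SO3"
  unfolding SO3_def by (auto simp: orthogonal_matrix_mul det_mul)

lemma measurable_gmul_right:
  assumes "h \<in> Gset"
  shows "(\<lambda>g. gmul g h) \<in> measurable Gspace Gspace"
proof -
  obtain S q where h: "h = (S, q)" "S \<in> SO3" "bij q"
    using assms unfolding Gset_def by auto
  have "(\<lambda>g. fst g ** S) \<in> measurable Gspace (restrict_space borel SO3)"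
  proof (subst measurable_restrict_space2_iff, intro conjI)
    have "continuous_on UNIV (\<lambda>R::real^3^3. R ** S)"
      unfolding matrix_matrix_mult_def by (intro continuous_intros)
    moreover have "fst \<in> borel_measurable Gspace"
      unfolding Gspace_def
      using measurable_fst measurable_restrict_space2_iff by blast
    ultimately show "(\<lambda>g. fst g ** S) \<in> borel_measurable Gspace"
      by (rule borel_measurable_continuous_on)
    show "(\<lambda>g. fst g ** S) \<in> space Gspace \<rightarrow> SO3"
      using h(2) by (auto simp: space_Gspace Gset_def intro: SO3_mult)
  qed
  moreover have "(\<lambda>g. snd g \<circ> q) \<in> measurable Gspace (count_space {p. bij p})"
    unfolding Gspace_def
    by (rule measurable_compose[OF measurable_snd])
       (use h(3) in \<open>auto simp: measurable_count_space_eq1 intro: bij_comp[unfolded comp_def]\<close>)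
  ultimately have "(\<lambda>g. (fst g ** S, snd g \<circ> q)) \<in> measurable Gspace Gspace"
    unfolding Gspace_def by (rule measurable_Pair)
  then show ?thesis
    unfolding h gmul_def by simp
qed

definition orbit_measure :: "((real^3^3) \<times> ('n::finite \<Rightarrow> 'n)) measure
    \<Rightarrow> ('n, 'h::finite, 'e::finite) config \<Rightarrow> ('n, 'h, 'e) config measure" where
  "orbit_measure lam Z = distr lam Mspace (\<lambda>g. act g Z)"

lemma randomize_eq_bind: "randomize lam nu = nu \<bind> orbit_measure lam"
  unfolding randomize_def orbit_measure_def ..

lemma prob_space_orbit_measure:
  assumes "haar_prob lam" "Z \<in> space Mspace"
  shows "prob_space (orbit_measure lam Z)"
  unfolding orbit_measure_def
  using haar_prob_basics[OF assms(1)] measurable_act_at[OF assms(2)]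
  by (simp add: prob_space.prob_space_distr)

lemma measurable_orbit_measure:
  assumes "haar_prob lam"
  shows "orbit_measure lam \<in> measurable Mspace (subprob_algebra Mspace)"
proof -
  note lam = haar_prob_basics[OF assms]
  have "snd \<in> measurable (Mspace \<Otimes>\<^sub>M lam) Gspace"
    using measurable_snd measurable_cong_sets[OF refl lam(2)] by blast
  from measurable_act[OF this measurable_fst]
  have "(\<lambda>(Z, g). act g Z) \<in> measurable (Mspace \<Otimes>\<^sub>M lam) Mspace"
    by (simp add: case_prod_beta')
  moreover have "(\<lambda>_. lam) \<in> measurable Mspace (subprob_algebra lam)"
    by (rule measurable_const)
       (simp add: space_subprob_algebra prob_space_imp_subprob_space[OF lam(1)])
  ultimately show ?thesis
    unfolding orbit_measure_def[abs_def] by (rule measurable_distr2)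
qed

lemma orbit_measure_act:
  assumes haar: "haar_prob lam" and h: "h \<in> Gset" and Z: "Z \<in> space Mspace"
  shows "orbit_measure lam (act h Z) = orbit_measure lam Z"
proof -
  note lam = haar_prob_basics[OF haar]
  obtain S q where h_eq: "h = (S, q)" "bij q"
    using h unfolding Gset_def by auto
  have "distr lam Mspace (\<lambda>g. act g (act h Z)) = distr lam Mspace (\<lambda>g. act (gmul g h) Z)"
  proof (rule distr_cong[OF refl refl])
    fix g assume "g \<in> space lam"
    then obtain R p where "g = (R, p)" "bij p"
      using lam(3) unfolding Gset_def by auto
    then show "act g (act h Z) = act (gmul g h) Z"
      using h_eq act_gmul by simp
  qed
  also have "\<dots> = distr (distr lam Gspace (\<lambda>g. gmul g h)) Mspace (\<lambda>g. act g Z)"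
    using measurable_gmul_right[OF h] measurable_cong_sets[OF lam(2) refl]
    by (subst distr_distr[OF measurable_act_at[OF Z refl]]) (auto simp: comp_def)
  also have "distr lam Gspace (\<lambda>g. gmul g h) = lam"
    using haar h unfolding haar_prob_def by blast
  finally show ?thesis
    unfolding orbit_measure_def .
qed

lemma emeasure_orbit_measure:
  assumes "haar_prob lam" "Z \<in> space Mspace" "A \<in> sets Mspace"
  shows "emeasure (orbit_measure lam Z) A = (\<integral>\<^sup>+ g. indicator A (act g Z) \<partial>lam)"
proof -
  have "emeasure (orbit_measure lam Z) A = (\<integral>\<^sup>+ x. indicator A x \<partial>orbit_measure lam Z)"
    using assms(3) by (simp add: orbit_measure_def)
  also have "\<dots> = (\<integral>\<^sup>+ g. indicator A (act g Z) \<partial>lam)"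
    unfolding orbit_measure_def using assms haar_prob_basics(2)[OF assms(1)]
    by (intro nn_integral_distr measurable_act_at) auto
  finally show ?thesis .
qed

lemma nn_integral_indicator_act:
  assumes "G_invariant mu" "sets mu = sets Mspace" "g \<in> Gset" "A \<in> sets Mspace"
  shows "(\<integral>\<^sup>+ Z. indicator A (act g Z) \<partial>mu) = emeasure mu A"
proof -
  have "(\<integral>\<^sup>+ Z. indicator A (act g Z) \<partial>mu) = (\<integral>\<^sup>+ x. indicator A x \<partial>distr mu Mspace (act g))"
    using assms(4) by (intro nn_integral_distr[symmetric] measurable_act_const assms(2,3)) auto
  also have "distr mu Mspace (act g) = mu"
    using assms(1,3) unfolding G_invariant_def by blast
  finally show ?thesis
    using assms(2,4) by simp
qed

lemma bind_orbit_measure_invariant: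
  fixes mu :: "('n::finite, 'h::finite, 'e::finite) config measure"
  assumes haar: "haar_prob lam" and mu_prob: "prob_space mu" and mu_sets: "sets mu = sets Mspace"
    and mu_inv: "G_invariant mu"
  shows "mu \<bind> orbit_measure lam = mu"
proof -
  note lam_basics = haar_prob_basics[OF haar]
  interpret mu: prob_space mu by fact
  interpret lam: prob_space lam by (rule lam_basics(1))
  interpret pair_sigma_finite mu lam ..
  have K: "orbit_measure lam \<in> measurable mu (subprob_algebra Mspace)"
    using measurable_orbit_measure[OF haar] measurable_cong_sets[OF mu_sets refl] by blast
  have sets_bind: "sets (mu \<bind> orbit_measure lam) = sets Mspace"
    by (rule sets_bind) (auto simp: orbit_measure_def mu.not_empty)
  show ?thesis
  proof (rule measure_eqI)
    show "sets (mu \<bind> orbit_measure lam) = sets mu"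
      using sets_bind mu_sets by simp
  next
    fix A assume "A \<in> sets (mu \<bind> orbit_measure lam)"
    then have A: "A \<in> sets Mspace" using sets_bind by simp
    have "snd \<in> measurable (mu \<Otimes>\<^sub>M lam) Gspace" "fst \<in> measurable (mu \<Otimes>\<^sub>M lam) Mspace"
      using measurable_snd measurable_fst measurable_cong_sets[OF refl lam_basics(2)]
        measurable_cong_sets[OF refl mu_sets] by blast+
    from measurable_act[OF this]
    have "(\<lambda>(Z, g). indicator A (act g Z) :: ennreal) \<in> borel_measurable (mu \<Otimes>\<^sub>M lam)"
      using A by (simp add: case_prod_beta')
    note Fubini = Fubini'[OF this]
    have "emeasure (mu \<bind> orbit_measure lam) A = (\<integral>\<^sup>+ Z. emeasure (orbit_measure lam Z) A \<partial>mu)"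
      by (rule emeasure_bind[OF mu.not_empty K A])
    also have "\<dots> = (\<integral>\<^sup>+ Z. (\<integral>\<^sup>+ g. indicator A (act g Z) \<partial>lam) \<partial>mu)"
      using emeasure_orbit_measure[OF haar _ A] sets_eq_imp_space_eq[OF mu_sets]
      by (intro nn_integral_cong) simp
    also have "\<dots> = (\<integral>\<^sup>+ g. (\<integral>\<^sup>+ Z. indicator A (act g Z) \<partial>mu) \<partial>lam)"
      using Fubini by simp
    also have "\<dots> = (\<integral>\<^sup>+ g. emeasure mu A \<partial>lam)"
      using nn_integral_indicator_act[OF mu_inv mu_sets _ A] lam_basics(3)
      by (intro nn_integral_cong) simp
    also have "\<dots> = emeasure mu A"
      by (simp add: lam.emeasure_space_1)
    finally show "emeasure (mu \<bind> orbit_measure lam) A = emeasure mu A" .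
  qed
qed

lemma randomize_distr_orbit_map:
  fixes mu :: "('n::finite, 'h::finite, 'e::finite) config measure"
  assumes haar: "haar_prob lam" and mu_prob: "prob_space mu" and mu_sets: "sets mu = sets Mspace"
    and mu_inv: "G_invariant mu" and Psi: "Psi \<in> measurable Mspace Mspace"
    and Psi_orbit: "AE Z in mu. \<exists>g\<in>Gset. Psi Z = act g Z"
  shows "randomize lam (distr mu Mspace Psi) = mu"
proof -
  interpret mu: prob_space mu by fact
  have Psi_mu: "Psi \<in> measurable mu Mspace"
    using Psi measurable_cong_sets[OF mu_sets refl] by blast
  have K: "orbit_measure lam \<in> measurable Mspace (subprob_algebra Mspace)"
    by (rule measurable_orbit_measure[OF haar])
  have "randomize lam (distr mu Mspace Psi) = mu \<bind> (\<lambda>Z. orbit_measure lam (Psi Z))"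
    unfolding randomize_eq_bind by (rule bind_distr[OF Psi_mu K mu.not_empty])
  also have "\<dots> = mu \<bind> orbit_measure lam"
  proof (rule bind_cong_AE[OF refl])
    show "(\<lambda>Z. orbit_measure lam (Psi Z)) \<in> measurable mu (subprob_algebra Mspace)"
      using measurable_compose[OF Psi_mu K] by (simp add: comp_def)
    show "orbit_measure lam \<in> measurable mu (subprob_algebra Mspace)"
      using K measurable_cong_sets[OF mu_sets refl] by blast
    show "AE Z in mu. orbit_measure lam (Psi Z) = orbit_measure lam Z"
      using Psi_orbit
    proof (rule AE_mp, intro AE_I2 impI)
      fix Z assume Z: "Z \<in> space mu" and "\<exists>g\<in>Gset. Psi Z = act g Z"
      then obtain g where "g \<in> Gset" "Psi Z = act g Z" by blast
      then show "orbit_measure lam (Psi Z) = orbit_measure lam Z"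
        using orbit_measure_act[OF haar] Z sets_eq_imp_space_eq[OF mu_sets] by simp
    qed
  qed
  also have "\<dots> = mu"
    by (rule bind_orbit_measure_invariant[OF haar mu_prob mu_sets mu_inv])
  finally show ?thesis .
qed

theorem mainTheorem3:
  fixes lam :: "((real^3^3) \<times> ('n::finite \<Rightarrow> 'n)) measure"
    and mu mu_eq :: "('n, 'h::finite, 'e::finite) config measure"
    and Psi :: "('n, 'h, 'e) config \<Rightarrow> ('n, 'h, 'e) config"
    and D :: "('n, 'h, 'e) config set"
    and nu_hat :: "'p \<Rightarrow> ('n, 'h, 'e) config measure"
    and \<epsilon> :: real
  assumes haar: "haar_prob lam"
    and mu_prob: "prob_space mu" and mu_sets: "sets mu = sets Mspace"
    and mu_inv: "G_invariant mu"
    and stab: "AE Z in mu. \<forall>g\<in>Gset. act g Z = Z \<longrightarrow> g = (mat 1, id)"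
    and Psi_meas: "Psi \<in> measurable Mspace Mspace"
    and D_sets: "D \<in> sets Mspace" and D_full: "emeasure mu D = 1"
    and Psi_orbit: "\<forall>Z\<in>D. \<exists>g\<in>Gset. Psi Z = act g Z"
    and Psi_inv: "\<forall>Z\<in>D. \<forall>g\<in>Gset. Psi (act g Z) = Psi Z"
    and eps: "\<epsilon> > 0"
    and eq_prob: "prob_space mu_eq" and eq_sets: "sets mu_eq = sets Mspace"
    and eq_inv: "G_invariant mu_eq"
    and eq_D: "emeasure mu_eq D = 1"
    and eq_tv: "tv mu_eq mu < \<epsilon>"
    and fam: "\<forall>\<theta>. prob_space (nu_hat \<theta>) \<and> sets (nu_hat \<theta>) = sets Mspace
                  \<and> (AE Z in nu_hat \<theta>. Z \<in> Psi ` D)"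
    and inf_le: "(INF \<theta>. tv (nu_hat \<theta>) (distr mu Mspace Psi))
                   \<le> tv (distr mu_eq Mspace Psi) (distr mu Mspace Psi)"
  shows "\<exists>\<theta>. tv (randomize lam (nu_hat \<theta>)) mu < \<epsilon>"
proof -
  interpret mu: prob_space mu by fact
  define nu where "nu = distr mu Mspace Psi"
  have nu_prob: "prob_space nu"
    unfolding nu_def using Psi_meas measurable_cong_sets[OF mu_sets refl]
    by (blast intro: mu.prob_space_distr)
  have "AE Z in mu. Z \<in> D"
    using D_full D_sets mu_sets by (intro mu.AE_prob_1) (simp add: measure_def)
  then have "AE Z in mu. \<exists>g\<in>Gset. Psi Z = act g Z"
    using Psi_orbit by auto
  then have randomize_nu: "randomize lam nu = mu"
    unfolding nu_def by (rule randomize_distr_orbit_map[OF haar mu_prob mu_sets mu_inv Psi_meas])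
  have "tv (distr mu_eq Mspace Psi) nu \<le> tv mu_eq mu"
    unfolding nu_def by (rule tv_distr_le[OF eq_prob mu_prob eq_sets mu_sets Psi_meas])
  then have "(INF \<theta>. tv (nu_hat \<theta>) nu) < \<epsilon>"
    using inf_le eq_tv unfolding nu_def by linarith
  then obtain \<theta> where \<theta>: "tv (nu_hat \<theta>) nu < \<epsilon>"
    using cInf_lessD[of "range (\<lambda>\<theta>. tv (nu_hat \<theta>) nu)"] by auto
  have "tv (randomize lam (nu_hat \<theta>)) mu = tv (nu_hat \<theta> \<bind> orbit_measure lam) (nu \<bind> orbit_measure lam)"
    using randomize_nu by (simp add: randomize_eq_bind)
  also have "\<dots> \<le> tv (nu_hat \<theta>) nu"
    using fam nu_prob measurable_orbit_measure[OF haar] prob_space_orbit_measure[OF haar]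
    by (intro tv_bind_le[where M=Mspace]) (auto simp: nu_def)
  finally show ?thesis
    using \<theta> by (intro exI[of _ \<theta>]) linarith
qed

end
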